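(* Let $S$ be an affine semigroup, $K$ a field, $F$ a nonempty face of $\mathrm{pos}(S)$, and $\gamma_1,\ldots,\gamma_k\in S$. Suppose that $\widetilde{S_F}$ is a free commutative monoid and the images of $\gamma_1,\ldots,\gamma_k$ form a basis of it. Then: (1) $F$ is contained in precisely $k$ facets $F_i=\mathrm{pos}(S)\cap H_i$ ($i=1,\ldots,k$) of $\mathrm{pos}(S)$, and $F=F_1\cap\cdots\cap F_k$; (2) $\sigma_i(\gamma_j)=\delta_{ij}$ for all $1\le i,j\le k$, where $\sigma_i$ is the primitive linear form associated with $H_i$; (3) $\mathrm{grp}(S\cap F)=\mathrm{grp}(S)\cap H_1\cap\cdots\cap H_k$.
   Context: An affine semigroup is a finitely generated submonoid $S$ of $\mathbb{Z}^n$ (containing $0$) with $\mathrm{grp}(S)=\mathbb{Z}^n$. $\mathrm{pos}(S)$ is the set of nonnegative real linear combinations of elements of $S$; a face is its intersection with a supporting hyperplane, and a facet is a face of codimension one (codimension $=n-\dim$ of the linear span). Each facet has the form $\mathrm{pos}(S)\cap H$ where $H=\{\sigma=0\}$ and $\sigma$ is a primitive linear form (a linear form with relatively prime integer coefficients) with $\sigma\ge 0$ on $\mathrm{pos}(S)$; $\sigma$ is called the primitive linear form associated with $H$. $S_F=\{\alpha-\beta:\alpha\in S,\beta\in S\cap F\}$, whose group of units is $\mathrm{grp}(S\cap F)$, and $\widetilde{S_F}$ is the quotient of $S_F$ by its group of units. *)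

theory Defs
  imports "HOL-Analysis.Analysis"
begin

text \<open>Lattice points of Z^n are int^'n; real points of R^n are real^'n.
  The dimension n = CARD('n) is an arbitrary (type-level) fixed positive integer.\<close>

definition rvec :: "int^'n \<Rightarrow> real^'n" where
  "rvec v = (\<chi> i. real_of_int (v $ i))"

definition ilf :: "int^'n \<Rightarrow> int^'n \<Rightarrow> int" where
  "ilf \<sigma> v = (\<Sum>i\<in>UNIV. \<sigma> $ i * v $ i)"

definition rlf :: "int^'n \<Rightarrow> real^'n \<Rightarrow> real" where
  "rlf \<sigma> x = (\<Sum>i\<in>UNIV. real_of_int (\<sigma> $ i) * x $ i)"

definition primitive_form :: "int^'n \<Rightarrow> bool" where
  "primitive_form \<sigma> \<longleftrightarrow> Gcd (range (\<lambda>i. \<sigma> $ i)) = 1"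

definition grp :: "(int^'n) set \<Rightarrow> (int^'n) set" where
  "grp X = {x. \<exists>T c. finite T \<and> T \<subseteq> X \<and>
      x = (\<Sum>v\<in>T. (\<chi> i. c v * v $ i))}"

definition monoid_gen :: "(int^'n) set \<Rightarrow> (int^'n) set" where
  "monoid_gen G = {x. \<exists>T c. finite T \<and> T \<subseteq> G \<and> (\<forall>v\<in>T. c v \<ge> 0) \<and>
      x = (\<Sum>v\<in>T. (\<chi> i. c v * v $ i))}"

definition affine_semigroup :: "(int^'n) set \<Rightarrow> bool" where
  "affine_semigroup S \<longleftrightarrow> (\<exists>G. finite G \<and> S = monoid_gen G) \<and> grp S = UNIV"

definition pos :: "(int^'n) set \<Rightarrow> (real^'n) set" where
  "pos S = {x. \<exists>T c. finite T \<and> T \<subseteq> S \<and> (\<forall>v\<in>T. c v \<ge> (0::real)) \<and>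
      x = (\<Sum>v\<in>T. c v *\<^sub>R rvec v)}"

text \<open>A face: intersection of pos(S) with the zero set of a linear form that is
  nonnegative on pos(S) (the zero form gives pos(S) itself).\<close>
definition is_face :: "(int^'n) set \<Rightarrow> (real^'n) set \<Rightarrow> bool" where
  "is_face S F \<longleftrightarrow> (\<exists>l::real^'n. (\<forall>x\<in>pos S. l \<bullet> x \<ge> 0) \<and>
      F = {x \<in> pos S. l \<bullet> x = 0})"

definition is_facet :: "(int^'n) set \<Rightarrow> (real^'n) set \<Rightarrow> bool" where
  "is_facet S F \<longleftrightarrow> is_face S F \<and> dim F = CARD('n) - 1"

definition lat_in :: "(int^'n) set \<Rightarrow> (real^'n) set \<Rightarrow> (int^'n) set" where
  "lat_in S F = {s \<in> S. rvec s \<in> F}"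

definition S_loc :: "(int^'n) set \<Rightarrow> (real^'n) set \<Rightarrow> (int^'n) set" where
  "S_loc S F = {a - b | a b. a \<in> S \<and> b \<in> lat_in S F}"

text \<open>The quotient of S_F by its group of units grp(S \<inter> F) is a free commutative
  monoid with basis the images of gamma_0..gamma_(k-1): every element of S_F is
  congruent modulo grp(S \<inter> F) to a unique N-combination of the gammas.\<close>
definition free_basis_mod :: "(int^'n) set \<Rightarrow> (real^'n) set \<Rightarrow> nat \<Rightarrow> (nat \<Rightarrow> int^'n) \<Rightarrow> bool" where
  "free_basis_mod S F k \<gamma> \<longleftrightarrow>
     (\<forall>x\<in>S_loc S F.
        (\<exists>m::nat\<Rightarrow>nat. x - (\<Sum>j<k. (\<chi> i. int (m j) * \<gamma> j $ i)) \<in> grp (lat_in S F)) \<and>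
        (\<forall>m m'::nat\<Rightarrow>nat.
           x - (\<Sum>j<k. (\<chi> i. int (m j) * \<gamma> j $ i)) \<in> grp (lat_in S F) \<longrightarrow>
           x - (\<Sum>j<k. (\<chi> i. int (m' j) * \<gamma> j $ i)) \<in> grp (lat_in S F) \<longrightarrow>
           (\<forall>j<k. m j = m' j)))"

end

theory Submission
  imports Defs
begin

(* Write U = grp(S \<inter> F).  The free-basis hypothesis says that every
   element of S is congruent modulo U to a unique N-combination of the gammas.
   Since S generates Z^n, existence and uniqueness extend to Z-combinations of
   arbitrary lattice points, and the (unique) coefficients are integer linear
   forms sigma_1..sigma_k ("coordinate forms"): v \<equiv> \<Sum> sigma_j(v) gamma_j mod U.
   They satisfy sigma_i(gamma_j) = delta_ij, are nonnegative on S, and their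
   common kernel is U; this gives (2) and (3).  A nonnegative form vanishes at a
   point of pos(S) iff it vanishes on the generators used, so F = pos(S \<inter> U) is
   cut out by the sigma_i.  Every form vanishing on F vanishes on U and hence is
   the combination \<Sum> w(gamma_j) sigma_j; a dimension count then shows that the
   facets through F are exactly the hyperplane sections by the sigma_i, giving (1). *)

section \<open>Combination sets\<close>

text \<open>Both generated subgroups and generated submonoids are sets of integer
  combinations whose coefficients satisfy a predicate P.\<close>

definition combinations :: "(int \<Rightarrow> bool) \<Rightarrow> (int^'n) set \<Rightarrow> (int^'n) set" where
  "combinations P X = {x. \<exists>T c. finite T \<and> T \<subseteq> X \<and> (\<forall>v\<in>T. P (c v)) \<and>
      x = (\<Sum>v\<in>T. c v *s v)}"

lemma grp_eq_combinations: "grp X = combinations (\<lambda>_. True) X"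
  by (simp add: grp_def combinations_def vector_scalar_mult_def)

lemma monoid_gen_eq_combinations: "monoid_gen X = combinations (\<lambda>c. c \<ge> 0) X"
  by (simp add: monoid_gen_def combinations_def vector_scalar_mult_def)

lemma sum_smult_extend:
  fixes c :: "int^'n \<Rightarrow> int"
  assumes "finite B" "A \<subseteq> B"
  shows "(\<Sum>v\<in>A. c v *s v) = (\<Sum>v\<in>B. (if v \<in> A then c v else 0) *s v)"
proof -
  have "(\<Sum>v\<in>B. (if v \<in> A then c v else 0) *s v) = (\<Sum>v\<in>B. if v \<in> A then c v *s v else 0)"
    by (intro sum.cong) auto
  also have "\<dots> = (\<Sum>v\<in>B \<inter> A. c v *s v)"
    using assms(1) by (rule sum.inter_restrict[symmetric])
  also have "B \<inter> A = A" using assms(2) by blast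
  finally show ?thesis by simp
qed

lemma combinations_add:
  assumes P0: "P 0" and P_add: "\<And>a b. P a \<Longrightarrow> P b \<Longrightarrow> P (a + b)"
    and "x \<in> combinations P X" "y \<in> combinations P X"
  shows "x + y \<in> combinations P X"
proof -
  obtain A a where A: "finite A" "A \<subseteq> X" "\<forall>v\<in>A. P (a v)" "x = (\<Sum>v\<in>A. a v *s v)"
    using assms(3) by (auto simp: combinations_def)
  obtain B b where B: "finite B" "B \<subseteq> X" "\<forall>v\<in>B. P (b v)" "y = (\<Sum>v\<in>B. b v *s v)"
    using assms(4) by (auto simp: combinations_def)
  define c where "c v = (if v \<in> A then a v else 0) + (if v \<in> B then b v else 0)" for v
  have "x = (\<Sum>v\<in>A \<union> B. (if v \<in> A then a v else 0) *s v)"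
    using A(1,4) B(1) by (simp add: sum_smult_extend[of "A \<union> B" A])
  moreover have "y = (\<Sum>v\<in>A \<union> B. (if v \<in> B then b v else 0) *s v)"
    using A(1) B(1,4) by (simp add: sum_smult_extend[of "A \<union> B" B])
  ultimately have sum_eq: "x + y = (\<Sum>v\<in>A \<union> B. c v *s v)"
    by (simp add: c_def vector_sadd_rdistrib sum.distrib)
  have coeffs: "\<forall>v\<in>A \<union> B. P (c v)"
    using A(3) B(3) P0 P_add by (auto simp: c_def)
  have "finite (A \<union> B)" "A \<union> B \<subseteq> X" using A(1,2) B(1,2) by auto
  with coeffs sum_eq show ?thesis
    unfolding combinations_def by (intro CollectI exI[of _ "A \<union> B"] exI[of _ c] conjI) assumption+
qed

lemma combinations_smult:
  assumes "\<And>b. P b \<Longrightarrow> P (a * b)" and "x \<in> combinations P X"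
  shows "a *s x \<in> combinations P X"
proof -
  obtain T c where T: "finite T" "T \<subseteq> X" "\<forall>v\<in>T. P (c v)" "x = (\<Sum>v\<in>T. c v *s v)"
    using assms(2) by (auto simp: combinations_def)
  have "a *s x = (\<Sum>v\<in>T. (a * c v) *s v)"
    by (simp add: T(4) vec_eq_iff sum_distrib_left mult.assoc)
  moreover have "\<forall>v\<in>T. P (a * c v)" using T(3) assms(1) by blast
  ultimately show ?thesis
    using T(1,2) unfolding combinations_def
    by (intro CollectI exI[of _ T] exI[of _ "\<lambda>v. a * c v"] conjI) assumption+
qed

lemma combinations_zero: "0 \<in> combinations P X"
  unfolding combinations_def by (intro CollectI exI[of _ "{}"]) auto

lemma combinations_base: "P 1 \<Longrightarrow> x \<in> X \<Longrightarrow> x \<in> combinations P X"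
  unfolding combinations_def by (intro CollectI exI[of _ "{x}"] exI[of _ "\<lambda>_. 1"]) auto

lemma grp_add: "x \<in> grp X \<Longrightarrow> y \<in> grp X \<Longrightarrow> x + y \<in> grp X"
  unfolding grp_eq_combinations by (rule combinations_add) auto

lemma grp_smult: "x \<in> grp X \<Longrightarrow> a *s x \<in> grp X"
  unfolding grp_eq_combinations by (rule combinations_smult) auto

lemma grp_zero: "0 \<in> grp X"
  unfolding grp_eq_combinations by (rule combinations_zero)

lemma grp_base: "x \<in> X \<Longrightarrow> x \<in> grp X"
  unfolding grp_eq_combinations by (rule combinations_base) auto

lemma grp_diff:
  assumes "x \<in> grp X" "y \<in> grp X"
  shows "x - y \<in> grp X"
proof -
  have "x + (-1) *s y \<in> grp X" by (intro grp_add grp_smult assms)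
  moreover have "x + (-1) *s y = x - y" by (simp add: vec_eq_iff)
  ultimately show ?thesis by metis
qed

lemma grp_sum: "finite I \<Longrightarrow> (\<And>i. i \<in> I \<Longrightarrow> f i \<in> grp X) \<Longrightarrow> sum f I \<in> grp X"
  by (induction I rule: finite_induct) (auto intro: grp_add grp_zero)

lemma grp_minimal:
  assumes "0 \<in> D" "\<And>x y. x \<in> D \<Longrightarrow> y \<in> D \<Longrightarrow> x + y \<in> D"
    and "\<And>a x. x \<in> D \<Longrightarrow> a *s x \<in> D" and "X \<subseteq> D"
  shows "grp X \<subseteq> D"
proof
  fix x assume "x \<in> grp X"
  then obtain T c where T: "finite T" "T \<subseteq> X" "x = (\<Sum>v\<in>T. c v *s v)"
    by (auto simp: grp_eq_combinations combinations_def)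
  have "(\<Sum>v\<in>T. c v *s v) \<in> D"
    using T(1,2) by (induction T rule: finite_induct) (use assms in auto)
  then show "x \<in> D" using T(3) by simp
qed

lemma monoid_gen_add: "x \<in> monoid_gen X \<Longrightarrow> y \<in> monoid_gen X \<Longrightarrow> x + y \<in> monoid_gen X"
  unfolding monoid_gen_eq_combinations by (rule combinations_add) auto

lemma monoid_gen_zero: "0 \<in> monoid_gen X"
  unfolding monoid_gen_eq_combinations by (rule combinations_zero)

section \<open>Lattice points as real vectors\<close>

lemma rvec_add: "rvec (a + b) = rvec a + rvec b"
  by (simp add: rvec_def vec_eq_iff)

lemma rvec_zero: "rvec 0 = 0"
  by (simp add: rvec_def vec_eq_iff)

lemma rvec_smult: "rvec (c *s a) = real_of_int c *\<^sub>R rvec a"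
  by (simp add: rvec_def vec_eq_iff)

lemma rvec_sum: "rvec (sum f I) = (\<Sum>i\<in>I. rvec (f i))"
  by (simp add: rvec_def vec_eq_iff)

lemma rlf_inner: "rlf \<sigma> x = rvec \<sigma> \<bullet> x"
  by (simp add: rlf_def rvec_def inner_vec_def)

lemma ilf_inner: "real_of_int (ilf \<sigma> v) = rvec \<sigma> \<bullet> rvec v"
  by (simp add: ilf_def rvec_def inner_vec_def)

lemma rlf_rvec: "rlf \<sigma> (rvec v) = real_of_int (ilf \<sigma> v)"
  by (simp add: rlf_inner ilf_inner)

lemma rvec_grp_span: "v \<in> grp X \<Longrightarrow> rvec v \<in> span (rvec ` X)"
proof -
  have "grp X \<subseteq> {v. rvec v \<in> span (rvec ` X)}"
  proof (rule grp_minimal)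
    show "0 \<in> {v. rvec v \<in> span (rvec ` X)}" by (simp add: rvec_zero span_zero)
    show "x + y \<in> {v. rvec v \<in> span (rvec ` X)}"
      if "x \<in> {v. rvec v \<in> span (rvec ` X)}" "y \<in> {v. rvec v \<in> span (rvec ` X)}" for x y
      using that by (simp add: rvec_add span_add)
    show "a *s x \<in> {v. rvec v \<in> span (rvec ` X)}"
      if "x \<in> {v. rvec v \<in> span (rvec ` X)}" for a x
      using that by (simp add: rvec_smult span_scale)
    show "X \<subseteq> {v. rvec v \<in> span (rvec ` X)}" by (auto intro: span_base)
  qed
  then show "v \<in> grp X \<Longrightarrow> rvec v \<in> span (rvec ` X)" by blast
qed

lemma rvec_axis: "rvec (axis t 1) = axis t 1"
  by (simp add: rvec_def axis_def vec_eq_iff)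

lemma vec_eq_on_lattice:
  fixes a b :: "real^'n"
  assumes "\<And>v. a \<bullet> rvec v = b \<bullet> rvec v"
  shows "a = b"
  using assms[of "axis _ 1"] by (simp add: vec_eq_iff rvec_axis inner_axis)

lemma dim_full:
  fixes A :: "(real^'n) set"
  assumes "\<And>v. rvec v \<in> span A"
  shows "dim A = CARD('n)"
proof -
  have "x \<in> span A" for x :: "real^'n"
  proof -
    have "x = (\<Sum>t\<in>UNIV. x $ t *\<^sub>R rvec (axis t 1))"
      using basis_expansion[of x] by (simp add: rvec_axis scalar_mult_eq_scaleR)
    also have "\<dots> \<in> span A" using assms by (intro span_sum span_scale) auto
    finally show ?thesis .
  qed
  then have "span A = UNIV" by blast
  then have "dim A = dim (UNIV :: (real^'n) set)" by (metis dim_span)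
  then show ?thesis by simp
qed

section \<open>Cones generated by lattice points\<close>

lemma rvec_in_pos: "s \<in> S \<Longrightarrow> rvec s \<in> pos S"
  unfolding pos_def by (intro CollectI exI[of _ "{s}"] exI[of _ "\<lambda>_. 1"]) auto

lemma zero_in_pos: "0 \<in> pos S"
  unfolding pos_def by (intro CollectI exI[of _ "{}"]) auto

lemma pos_subset: "S \<subseteq> S' \<Longrightarrow> pos S \<subseteq> pos S'"
  unfolding pos_def by blast

lemma pos_nonneg:
  assumes "\<forall>s\<in>S. 0 \<le> w \<bullet> rvec s" and "x \<in> pos S"
  shows "0 \<le> w \<bullet> x"
proof -
  obtain T c where T: "finite T" "T \<subseteq> S" "\<forall>v\<in>T. c v \<ge> 0" "x = (\<Sum>v\<in>T. c v *\<^sub>R rvec v)"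
    using assms(2) by (auto simp: pos_def)
  have "w \<bullet> x = (\<Sum>v\<in>T. c v * (w \<bullet> rvec v))" by (simp add: T(4) inner_sum_right)
  also have "\<dots> \<ge> 0" using T assms(1) by (intro sum_nonneg) auto
  finally show ?thesis .
qed

lemma pos_face_eq:
  assumes W_nonneg: "\<forall>w\<in>W. \<forall>s\<in>S. 0 \<le> w \<bullet> rvec s"
  shows "{x \<in> pos S. \<forall>w\<in>W. w \<bullet> x = 0} = pos {s \<in> S. \<forall>w\<in>W. w \<bullet> rvec s = 0}"
proof (intro equalityI subsetI)
  fix x assume "x \<in> {x \<in> pos S. \<forall>w\<in>W. w \<bullet> x = 0}"
  then have x: "x \<in> pos S" "\<forall>w\<in>W. w \<bullet> x = 0" by auto
  obtain T c where T: "finite T" "T \<subseteq> S" "\<forall>v\<in>T. c v \<ge> 0" "x = (\<Sum>v\<in>T. c v *\<^sub>R rvec v)"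
    using x(1) by (auto simp: pos_def)
  define T' where "T' = {v \<in> T. c v \<noteq> 0}"
  have vanish: "w \<bullet> rvec v = 0" if w: "w \<in> W" and v: "v \<in> T'" for w v
  proof -
    have sum_zero: "(\<Sum>v\<in>T. c v * (w \<bullet> rvec v)) = 0"
      using x(2) w by (simp add: T(4) inner_sum_right)
    have nonneg: "0 \<le> c v * (w \<bullet> rvec v)" if "v \<in> T" for v
      using that T(2,3) W_nonneg w by (intro mult_nonneg_nonneg) auto
    have "\<forall>v\<in>T. c v * (w \<bullet> rvec v) = 0"
      using sum_nonneg_eq_0_iff[OF T(1), of "\<lambda>v. c v * (w \<bullet> rvec v)"] nonneg sum_zero
      by blast
    then show ?thesis using v by (auto simp: T'_def)
  qed
  have "finite T'" using T(1) by (simp add: T'_def)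
  have "x = (\<Sum>v\<in>T'. c v *\<^sub>R rvec v)"
    unfolding T(4) using T(1) by (intro sum.mono_neutral_right) (auto simp: T'_def)
  moreover have "T' \<subseteq> {s \<in> S. \<forall>w\<in>W. w \<bullet> rvec s = 0}"
    using T(2) vanish by (auto simp: T'_def)
  moreover have "\<forall>v\<in>T'. c v \<ge> 0" using T(3) by (simp add: T'_def)
  ultimately show "x \<in> pos {s \<in> S. \<forall>w\<in>W. w \<bullet> rvec s = 0}"
    using \<open>finite T'\<close> unfolding pos_def by (intro CollectI exI[of _ T'] exI[of _ c] conjI)
next
  fix x assume x: "x \<in> pos {s \<in> S. \<forall>w\<in>W. w \<bullet> rvec s = 0}"
  have "x \<in> pos S" using x pos_subset[of "{s \<in> S. \<forall>w\<in>W. w \<bullet> rvec s = 0}" S] by blast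
  moreover have "w \<bullet> x = 0" if w: "w \<in> W" for w
  proof -
    have "0 \<le> w \<bullet> x" using w W_nonneg by (intro pos_nonneg[OF _ x]) auto
    moreover have "0 \<le> (-w) \<bullet> x" using w W_nonneg by (intro pos_nonneg[OF _ x]) auto
    ultimately show ?thesis by simp
  qed
  ultimately show "x \<in> {x \<in> pos S. \<forall>w\<in>W. w \<bullet> x = 0}" by blast
qed

lemma dim_pos:
  assumes "grp S = (UNIV :: (int^'n) set)"
  shows "dim (pos S) = CARD('n)"
proof (rule dim_full)
  fix v :: "int^'n"
  have "rvec v \<in> span (rvec ` S)" using assms by (intro rvec_grp_span) auto
  also have "\<dots> \<subseteq> span (pos S)" by (intro span_mono) (auto intro: rvec_in_pos)
  finally show "rvec v \<in> span (pos S)" .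
qed

section \<open>Coordinates modulo the group of units\<close>

locale free_quotient_basis =
  fixes S :: "(int^'n) set" and F :: "(real^'n) set"
    and k :: nat and \<gamma> :: "nat \<Rightarrow> int^'n"
  assumes S_add: "\<And>x y. x \<in> S \<Longrightarrow> y \<in> S \<Longrightarrow> x + y \<in> S"
    and S_zero: "0 \<in> S"
    and S_generates: "grp S = UNIV"
    and zero_in_F: "0 \<in> F"
    and gamma_in_S: "\<And>j. j < k \<Longrightarrow> \<gamma> j \<in> S"
    and free_basis: "free_basis_mod S F k \<gamma>"
begin

definition gsum :: "(nat \<Rightarrow> int) \<Rightarrow> int^'n" where
  "gsum c = (\<Sum>j<k. c j *s \<gamma> j)"

abbreviation U :: "(int^'n) set" where
  "U \<equiv> grp (lat_in S F)"

lemma free_basis_gsum: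
  assumes "x \<in> S_loc S F"
  shows "\<exists>m::nat \<Rightarrow> nat. x - gsum (\<lambda>j. int (m j)) \<in> U"
    and "\<And>m m' :: nat \<Rightarrow> nat. x - gsum (\<lambda>j. int (m j)) \<in> U \<Longrightarrow>
           x - gsum (\<lambda>j. int (m' j)) \<in> U \<Longrightarrow> j < k \<Longrightarrow> m j = m' j"
  using free_basis assms by (auto simp: free_basis_mod_def gsum_def vector_scalar_mult_def)

lemma gsum_diff: "gsum a - gsum b = gsum (\<lambda>j. a j - b j)"
  by (simp add: gsum_def vec_eq_iff sum_subtractf left_diff_distrib)

lemma gsum_add: "gsum a + gsum b = gsum (\<lambda>j. a j + b j)"
  by (simp add: gsum_def vec_eq_iff sum.distrib distrib_right)

lemma gsum_smult: "c *s gsum a = gsum (\<lambda>j. c * a j)"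
  by (simp add: gsum_def vec_eq_iff sum_distrib_left mult.assoc)

lemma gsum_sum: "gsum (\<lambda>j. \<Sum>t\<in>I. f t j) = (\<Sum>t\<in>I. gsum (f t))"
  by (simp add: gsum_def vec_eq_iff sum_distrib_right sum.swap[of _ I])

lemma gsum_cong: "(\<And>j. j < k \<Longrightarrow> a j = b j) \<Longrightarrow> gsum a = gsum b"
  by (simp add: gsum_def)

lemma gsum_unit: "j < k \<Longrightarrow> gsum (\<lambda>i. if i = j then 1 else 0) = \<gamma> j"
  by (simp add: gsum_def if_distrib[of "\<lambda>c. c *s \<gamma> _"] sum.delta cong: if_cong)

lemma gsum_nat_in_S: "gsum (\<lambda>j. int (m j)) \<in> S"
proof -
  have mult_in_S: "int n *s x \<in> S" if "x \<in> S" for n x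
    using that by (induction n) (auto simp: S_zero S_add vector_sadd_rdistrib)
  have "(\<Sum>j\<in>J. int (m j) *s \<gamma> j) \<in> S" if "finite J" "J \<subseteq> {..<k}" for J
    using that by (induction J rule: finite_induct) (auto simp: S_zero S_add mult_in_S gamma_in_S)
  then show ?thesis by (simp add: gsum_def)
qed

lemma S_in_S_loc: "s \<in> S \<Longrightarrow> s \<in> S_loc S F"
proof -
  have "0 \<in> lat_in S F" using S_zero zero_in_F by (simp add: lat_in_def rvec_zero)
  then show "s \<in> S \<Longrightarrow> s \<in> S_loc S F" unfolding S_loc_def by force
qed

text \<open>Uniqueness extends from N- to Z-coefficients: split the difference of two
  representations into its positive and negative parts.\<close>
lemma coefficients_unique:
  assumes "v - gsum c \<in> U" "v - gsum c' \<in> U" "j < k"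
  shows "c j = c' j"
proof -
  define m where "m i = nat (c i - c' i)" for i
  define m' where "m' i = nat (c' i - c i)" for i
  define x where "x = gsum (\<lambda>i. int (m i))"
  have "x - gsum (\<lambda>i. int (m' i)) = gsum (\<lambda>i. c i - c' i)"
    unfolding x_def gsum_diff m_def m'_def by (rule gsum_cong) auto
  also have "\<dots> = (v - gsum c') - (v - gsum c)" by (simp add: gsum_diff)
  also have "\<dots> \<in> U" by (rule grp_diff[OF assms(2,1)])
  finally have "x - gsum (\<lambda>i. int (m' i)) \<in> U" .
  moreover have "x - gsum (\<lambda>i. int (m i)) \<in> U" by (simp add: x_def grp_zero)
  moreover have "x \<in> S_loc S F" unfolding x_def by (intro S_in_S_loc gsum_nat_in_S)
  ultimately have "m j = m' j" using free_basis_gsum(2) assms(3) by blast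
  then show ?thesis by (simp add: m_def m'_def)
qed

text \<open>Existence extends from S to the group it generates, i.e. to all of Z^n.\<close>
lemma coefficients_exist: "\<exists>c. v - gsum c \<in> U"
proof -
  let ?R = "{v. \<exists>c. v - gsum c \<in> U}"
  have "grp S \<subseteq> ?R"
  proof (rule grp_minimal)
    have "0 - gsum (\<lambda>_. 0) \<in> U" by (simp add: gsum_def grp_zero)
    then show "0 \<in> ?R" by blast
  next
    fix x y assume "x \<in> ?R" "y \<in> ?R"
    then obtain a b where "x - gsum a \<in> U" "y - gsum b \<in> U" by auto
    then have "(x + y) - gsum (\<lambda>j. a j + b j) \<in> U"
      using grp_add by (fastforce simp: gsum_add[symmetric] algebra_simps)
    then show "x + y \<in> ?R" by blast
  next
    fix c x assume "x \<in> ?R"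
    then obtain a where "x - gsum a \<in> U" by auto
    then have "c *s x - gsum (\<lambda>j. c * a j) \<in> U"
      using grp_smult[of "x - gsum a" _ c] by (simp add: gsum_smult[symmetric] vector_ssub_ldistrib)
    then show "c *s x \<in> ?R" by blast
  next
    show "S \<subseteq> ?R" using free_basis_gsum(1)[OF S_in_S_loc] by blast
  qed
  then show ?thesis using S_generates by auto
qed

text \<open>The coordinate forms: sigma_j is the j-th coefficient of v modulo U,
  computed on the standard basis and extended linearly.\<close>
definition coord :: "nat \<Rightarrow> int^'n" where
  "coord j = (\<chi> t. (SOME c. axis t 1 - gsum c \<in> U) j)"

lemma coord_congruence: "v - gsum (\<lambda>j. ilf (coord j) v) \<in> U"
proof -
  define a where "a t = (SOME c. axis t 1 - gsum c \<in> U)" for t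
  have a: "axis t 1 - gsum (a t) \<in> U" for t
    unfolding a_def using coefficients_exist by (rule someI_ex)
  have "gsum (\<lambda>j. ilf (coord j) v) = gsum (\<lambda>j. \<Sum>t\<in>UNIV. v $ t * a t j)"
    by (simp add: ilf_def coord_def a_def mult.commute)
  also have "\<dots> = (\<Sum>t\<in>UNIV. v $ t *s gsum (a t))"
    by (simp add: gsum_sum gsum_smult)
  finally have "v - gsum (\<lambda>j. ilf (coord j) v) = (\<Sum>t\<in>UNIV. v $ t *s (axis t 1 - gsum (a t)))"
    by (simp add: vector_ssub_ldistrib sum_subtractf basis_expansion)
  also have "\<dots> \<in> U" using a by (intro grp_sum grp_smult) auto
  finally show ?thesis .
qed

text \<open>Consequently the coordinate forms read off the coefficients of any
  representation, which yields delta_ij on the gammas and nonnegativity on S.\<close>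
lemma coord_eqI: "v - gsum c \<in> U \<Longrightarrow> j < k \<Longrightarrow> ilf (coord j) v = c j"
  using coefficients_unique[OF coord_congruence] by metis

lemma coord_gamma: "i < k \<Longrightarrow> j < k \<Longrightarrow> ilf (coord i) (\<gamma> j) = (if i = j then 1 else 0)"
  using coord_eqI[of "\<gamma> j" "\<lambda>i. if i = j then 1 else 0" i] by (simp add: gsum_unit grp_zero)

lemma coord_nonneg: "s \<in> S \<Longrightarrow> i < k \<Longrightarrow> 0 \<le> ilf (coord i) s"
  using free_basis_gsum(1)[OF S_in_S_loc] coord_eqI by fastforce

lemma U_eq_kernel: "U = {v. \<forall>i<k. ilf (coord i) v = 0}"
proof (intro equalityI subsetI CollectI allI impI)
  fix v i assume "v \<in> U" "i < k"
  then show "ilf (coord i) v = 0" using coord_eqI[of v "\<lambda>_. 0" i] by (simp add: gsum_def)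
next
  fix v assume "v \<in> {v. \<forall>i<k. ilf (coord i) v = 0}"
  then have "gsum (\<lambda>j. ilf (coord j) v) = 0" by (simp add: gsum_def)
  then show "v \<in> U" using coord_congruence[of v] by simp
qed

text \<open>Since sigma_i(gamma_i) = 1, the coefficients of sigma_i are coprime.\<close>
lemma coord_primitive: "i < k \<Longrightarrow> primitive_form (coord i)"
proof -
  assume i: "i < k"
  let ?g = "Gcd (range (\<lambda>t. coord i $ t))"
  have "?g dvd ilf (coord i) (\<gamma> i)"
    unfolding ilf_def by (intro dvd_sum dvd_mult2 Gcd_dvd) auto
  then have "?g dvd 1" using coord_gamma[OF i i] by simp
  then show ?thesis by (simp add: primitive_form_def)
qed

end

section \<open>The facets through F\<close>

lemma inner_zero_on_span:
  assumes "\<forall>y\<in>A. w \<bullet> y = 0" and "x \<in> span A"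
  shows "w \<bullet> x = 0"
  using span_minimal[OF _ subspace_hyperplane[of w], of A] assms by auto

locale face_with_basis = free_quotient_basis S F k \<gamma>
  for S :: "(int^'n) set" and F k \<gamma> +
  fixes l :: "real^'n"
  assumes l_nonneg: "\<forall>x\<in>pos S. 0 \<le> l \<bullet> x"
    and F_def: "F = {x \<in> pos S. l \<bullet> x = 0}"
begin

abbreviation coord_face :: "nat \<Rightarrow> (real^'n) set" where
  "coord_face i \<equiv> {x \<in> pos S. rlf (coord i) x = 0}"

lemma coord_nonneg_pos: "x \<in> pos S \<Longrightarrow> i < k \<Longrightarrow> 0 \<le> rlf (coord i) x"
  unfolding rlf_inner by (rule pos_nonneg) (auto simp: ilf_inner[symmetric] coord_nonneg)

lemma inner_zero_on_U:
  assumes "\<forall>s\<in>lat_in S F. w \<bullet> rvec s = 0" and "u \<in> U"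
  shows "w \<bullet> rvec u = 0"
  using inner_zero_on_span[OF _ rvec_grp_span[OF assms(2)]] assms(1) by auto

lemma lat_in_F_eq: "lat_in S F = {s \<in> S. \<forall>i<k. ilf (coord i) s = 0}"
proof (intro equalityI subsetI)
  fix s assume "s \<in> lat_in S F"
  then show "s \<in> {s \<in> S. \<forall>i<k. ilf (coord i) s = 0}"
    using grp_base[of s] U_eq_kernel by (auto simp: lat_in_def)
next
  fix s assume s: "s \<in> {s \<in> S. \<forall>i<k. ilf (coord i) s = 0}"
  then have "s \<in> U" using U_eq_kernel by auto
  then have "l \<bullet> rvec s = 0"
    by (rule inner_zero_on_U[rotated]) (auto simp: lat_in_def F_def)
  then show "s \<in> lat_in S F" using s rvec_in_pos by (auto simp: lat_in_def F_def)
qed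

lemma F_eq_coords: "F = {x \<in> pos S. \<forall>i<k. rlf (coord i) x = 0}"
proof -
  let ?W = "(\<lambda>i. rvec (coord i)) ` {..<k}"
  have l_S: "\<forall>s\<in>S. 0 \<le> l \<bullet> rvec s" using l_nonneg rvec_in_pos by blast
  have "F = pos {s \<in> S. \<forall>w\<in>{l}. w \<bullet> rvec s = 0}"
    using pos_face_eq[of "{l}" S] l_S by (simp add: F_def)
  also have "{s \<in> S. \<forall>w\<in>{l}. w \<bullet> rvec s = 0} = lat_in S F"
    using rvec_in_pos by (auto simp: lat_in_def F_def)
  also have "\<dots> = {s \<in> S. \<forall>w\<in>?W. w \<bullet> rvec s = 0}"
    by (auto simp: lat_in_F_eq ilf_inner[symmetric])
  also have "pos \<dots> = {x \<in> pos S. \<forall>w\<in>?W. w \<bullet> x = 0}"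
    by (rule pos_face_eq[symmetric]) (auto simp: ilf_inner[symmetric] coord_nonneg)
  finally show ?thesis by (auto simp: rlf_inner)
qed

lemma F_subset_coord_face: "i < k \<Longrightarrow> F \<subseteq> coord_face i"
  using F_eq_coords by auto

lemma gamma_in_coord_face: "i < k \<Longrightarrow> j < k \<Longrightarrow> i \<noteq> j \<Longrightarrow> rvec (\<gamma> j) \<in> coord_face i"
  using rvec_in_pos[OF gamma_in_S[of j]] coord_gamma[of i j] by (simp add: rlf_rvec)

lemma coord_nonzero: "i < k \<Longrightarrow> rvec (coord i) \<noteq> 0"
proof
  assume "i < k" "rvec (coord i) = 0"
  then have "real_of_int (ilf (coord i) (\<gamma> i)) = 0" by (simp add: ilf_inner)
  then show False using coord_gamma[OF \<open>i < k\<close> \<open>i < k\<close>] by simp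
qed

lemma dim_coord_hyperplane: "i < k \<Longrightarrow> dim {x. rvec (coord i) \<bullet> x = 0} = CARD('n) - 1"
  using dim_hyperplane[OF coord_nonzero] by simp

text \<open>Each coordinate face is a facet: together with gamma_i it spans R^n, because
  every lattice point is a combination of the gammas modulo U \<subseteq> span F.\<close>
lemma dim_coord_face:
  assumes i: "i < k"
  shows "dim (coord_face i) = CARD('n) - 1"
proof -
  define A where "A = insert (rvec (\<gamma> i)) (coord_face i)"
  have "coord_face i \<subseteq> {x. rvec (coord i) \<bullet> x = 0}" by (auto simp: rlf_inner)
  then have upper: "dim (coord_face i) \<le> CARD('n) - 1"
    using dim_subset dim_coord_hyperplane[OF i] by metis
  have gammas: "rvec (\<gamma> j) \<in> span A" if "j < k" for j
    using gamma_in_coord_face[OF i that] by (cases "j = i") (auto simp: A_def intro: span_base)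
  have "rvec v \<in> span A" for v
  proof -
    let ?c = "\<lambda>j. ilf (coord j) v"
    have "rvec ` lat_in S F \<subseteq> span A"
      using F_subset_coord_face[OF i] by (auto simp: lat_in_def A_def intro: span_base)
    then have "rvec (v - gsum ?c) \<in> span A"
      using rvec_grp_span[OF coord_congruence] span_mono span_span by blast
    moreover have "rvec (gsum ?c) \<in> span A"
      unfolding gsum_def rvec_sum rvec_smult using gammas by (intro span_sum span_scale) auto
    ultimately show ?thesis
      using span_add by (fastforce simp: rvec_add[symmetric])
  qed
  then have "dim A = CARD('n)" by (rule dim_full)
  moreover have "dim A \<le> dim (coord_face i) + 1" by (simp add: A_def dim_insert)
  ultimately show ?thesis using upper by linarith
qed

lemma coord_face_facet: "i < k \<Longrightarrow> is_facet S (coord_face i)"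
  unfolding is_facet_def is_face_def
  by (intro conjI exI[of _ "rvec (coord i)"]) (auto simp: dim_coord_face coord_nonneg_pos rlf_inner[symmetric])

text \<open>The F_i are pairwise distinct: gamma_j lies in F_i for i \<noteq> j but not in F_j.\<close>
lemma coord_face_inj: "inj_on coord_face {..<k}"
proof (rule inj_onI, rule ccontr)
  fix i j assume ij: "i \<in> {..<k}" "j \<in> {..<k}" "coord_face i = coord_face j" "i \<noteq> j"
  then have "rvec (\<gamma> j) \<in> coord_face j" using gamma_in_coord_face by auto
  then show False using ij(2) coord_gamma by (simp add: rlf_rvec)
qed

lemma form_decomposition:
  assumes w: "\<forall>s\<in>lat_in S F. w \<bullet> rvec s = 0"
  shows "w = (\<Sum>j<k. (w \<bullet> rvec (\<gamma> j)) *\<^sub>R rvec (coord j))"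
proof (rule vec_eq_on_lattice)
  fix v
  let ?c = "\<lambda>j. ilf (coord j) v"
  have "w \<bullet> rvec v = w \<bullet> rvec (v - gsum ?c) + w \<bullet> rvec (gsum ?c)"
    by (simp add: rvec_add[symmetric] inner_add_right[symmetric])
  also have "w \<bullet> rvec (v - gsum ?c) = 0" by (rule inner_zero_on_U[OF w coord_congruence])
  also have "w \<bullet> rvec (gsum ?c) = (\<Sum>j<k. (w \<bullet> rvec (\<gamma> j)) * (rvec (coord j) \<bullet> rvec v))"
    by (simp add: gsum_def rvec_sum rvec_smult inner_sum_right ilf_inner mult.commute)
  finally show "w \<bullet> rvec v = (\<Sum>j<k. (w \<bullet> rvec (\<gamma> j)) *\<^sub>R rvec (coord j)) \<bullet> rvec v"
    by (simp add: inner_sum_left)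
qed

lemma dim_two_coord_hyperplanes:
  assumes "a < k" "b < k" "a \<noteq> b"
  shows "dim {x. rvec (coord a) \<bullet> x = 0 \<and> rvec (coord b) \<bullet> x = 0} < CARD('n) - 1"
proof -
  let ?V = "{x. rvec (coord a) \<bullet> x = 0 \<and> rvec (coord b) \<bullet> x = 0}"
  let ?H = "{x. rvec (coord a) \<bullet> x = 0}"
  have "rvec (\<gamma> b) \<in> ?H - ?V"
    using coord_gamma[OF assms(1,2)] coord_gamma[OF assms(2,2)] assms(3)
    by (simp add: ilf_inner[symmetric])
  then have "?V \<subset> ?H" by blast
  moreover have "subspace ?V" by (auto simp: subspace_def inner_add_right)
  moreover have "subspace ?H" by (rule subspace_hyperplane)
  ultimately have "span ?V \<subset> span ?H" by (simp only: span_eq_iff[THEN iffD2])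
  then have "dim ?V < dim ?H" by (rule dim_psubset)
  then show ?thesis using dim_coord_hyperplane[OF assms(1)] by simp
qed

text \<open>Every facet through F is a coordinate face: its form is a nonnegative
  combination of the sigma_j, and the facet dimension forces exactly one nonzero term.\<close>
lemma facet_through_F:
  assumes G: "is_facet S G" and FG: "F \<subseteq> G"
  shows "\<exists>i<k. G = coord_face i"
proof -
  obtain w where w_nonneg: "\<forall>x\<in>pos S. 0 \<le> w \<bullet> x" and G_def: "G = {x \<in> pos S. w \<bullet> x = 0}"
    using G by (auto simp: is_facet_def is_face_def)
  have dim_G: "dim G = CARD('n) - 1" using G by (simp add: is_facet_def)
  define coef where "coef j = w \<bullet> rvec (\<gamma> j)" for j
  have coef_nonneg: "0 \<le> coef j" if "j < k" for j
    using w_nonneg rvec_in_pos[OF gamma_in_S[OF that]] by (simp add: coef_def)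
  have w_eq: "w \<bullet> x = (\<Sum>j<k. coef j * rlf (coord j) x)" for x
    using FG G_def
    by (subst form_decomposition) (auto simp: lat_in_def coef_def inner_sum_left rlf_inner)
  have terms_zero: "coef j * rlf (coord j) x = 0" if "x \<in> G" "j < k" for x j
  proof -
    have "\<forall>j\<in>{..<k}. 0 \<le> coef j * rlf (coord j) x"
      using that(1) coef_nonneg coord_nonneg_pos by (auto simp: G_def)
    moreover have "(\<Sum>j<k. coef j * rlf (coord j) x) = 0" using that(1) w_eq[of x] by (simp add: G_def)
    ultimately show ?thesis
      using that(2) sum_nonneg_eq_0_iff[of "{..<k}" "\<lambda>j. coef j * rlf (coord j) x"] by simp
  qed
  have "\<exists>a<k. coef a \<noteq> 0"
  proof (rule ccontr)
    assume "\<not> (\<exists>a<k. coef a \<noteq> 0)"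
    then have "G = pos S" using w_eq by (auto simp: G_def)
    then have "dim G = CARD('n)" using dim_pos[OF S_generates] by simp
    moreover have "0 < CARD('n)" by (simp add: card_gt_0_iff)
    ultimately show False using dim_G by linarith
  qed
  then obtain a where a: "a < k" "coef a \<noteq> 0" by blast
  have others: "coef b = 0" if "b < k" "b \<noteq> a" for b
  proof (rule ccontr)
    assume "coef b \<noteq> 0"
    then have "G \<subseteq> {x. rvec (coord a) \<bullet> x = 0 \<and> rvec (coord b) \<bullet> x = 0}"
      using terms_zero a that by (auto simp: rlf_inner)
    then have "dim G \<le> dim {x. rvec (coord a) \<bullet> x = 0 \<and> rvec (coord b) \<bullet> x = 0}"
      by (rule dim_subset)
    then show False
      using dim_two_coord_hyperplanes[OF a(1) that(1) that(2)[symmetric]] dim_G by linarith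
  qed
  have "w \<bullet> x = coef a * rlf (coord a) x" for x
    unfolding w_eq using a(1) others by (simp add: sum.remove[of _ a] sum.neutral)
  then have "G = coord_face a" using a coef_nonneg[OF a(1)] by (auto simp: G_def)
  then show ?thesis using a(1) by blast
qed

end

theorem mainTheorem4:
  fixes S :: "(int^'n) set" and F :: "(real^'n) set"
    and k :: nat and \<gamma> :: "nat \<Rightarrow> int^'n"
  assumes "affine_semigroup S"
    and "is_face S F" and "F \<noteq> {}"
    and "\<forall>j<k. \<gamma> j \<in> S"
    and "free_basis_mod S F k \<gamma>"
  shows "\<exists>\<sigma> :: nat \<Rightarrow> int^'n.
     (\<forall>i<k. primitive_form (\<sigma> i) \<and> (\<forall>x\<in>pos S. rlf (\<sigma> i) x \<ge> 0) \<and>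
            is_facet S {x \<in> pos S. rlf (\<sigma> i) x = 0} \<and>
            F \<subseteq> {x \<in> pos S. rlf (\<sigma> i) x = 0}) \<and>
     inj_on (\<lambda>i. {x \<in> pos S. rlf (\<sigma> i) x = 0}) {..<k} \<and>
     {G. is_facet S G \<and> F \<subseteq> G} = (\<lambda>i. {x \<in> pos S. rlf (\<sigma> i) x = 0}) ` {..<k} \<and>
     F = {x \<in> pos S. \<forall>i<k. rlf (\<sigma> i) x = 0} \<and>
     (\<forall>i<k. \<forall>j<k. ilf (\<sigma> i) (\<gamma> j) = (if i = j then 1 else 0)) \<and>
     grp (lat_in S F) = {v \<in> grp S. \<forall>i<k. ilf (\<sigma> i) v = 0}"
proof -
  obtain G0 where S_def: "S = monoid_gen G0" and S_generates: "grp S = UNIV"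
    using assms(1) by (auto simp: affine_semigroup_def)
  obtain l where l_nonneg: "\<forall>x\<in>pos S. 0 \<le> l \<bullet> x" and F_def: "F = {x \<in> pos S. l \<bullet> x = 0}"
    using assms(2) by (auto simp: is_face_def)
  interpret face_with_basis S F k \<gamma> l
    by unfold_locales
      (use S_def S_generates l_nonneg F_def assms(4,5) zero_in_pos in
        \<open>auto simp: monoid_gen_add monoid_gen_zero\<close>)
  have facets: "{G. is_facet S G \<and> F \<subseteq> G} = coord_face ` {..<k}"
    using facet_through_F coord_face_facet F_subset_coord_face by fastforce
  show ?thesis
    using coord_primitive coord_nonneg_pos coord_face_facet F_subset_coord_face
      coord_face_inj facets F_eq_coords coord_gamma U_eq_kernel S_generates
    by (intro exI[of _ coord]) auto
qed

end
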